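(* Let $H$ be a simple, strongly connected digraph with at least one arc, let $k$ be a positive integer, and let $T$ be a tournament that does not contain $k$ pairwise arc-disjoint immersion copies of $H$. Then there is a set $F$ of at most $6d_{\mathrm{ctw}}\|H\|^2k^2$ arcs of $T$ such that $T-F$ does not contain $H$ as an immersion.
   Context: $\|H\|:=|V(H)|+|A(H)|$. A tournament is a simple digraph with exactly one arc between every pair of distinct vertices. An immersion copy of $H$ in a digraph $G$ is a subgraph $\widehat H$ of $G$ with a map sending vertices of $H$ to distinct vertices of $\widehat H$ and each arc $(u,v)$ of $H$ to a directed path from the image of $u$ to the image of $v$, such that each arc of $\widehat H$ lies on exactly one of these paths; $G$ contains $H$ as an immersion if it has such a subgraph. For an ordering $\sigma$ (bijection $V(T)\to[|V(T)|]$) and $\alpha\in\{0,\dots,|V(T)|\}$, the $\alpha$-cut is the set of arcs $(u,v)$ with $\sigma(u)>\alpha\ge\sigma(v)$; the width of $\sigma$ is the maximum size of its cuts and the cutwidth $\mathrm{ctw}(T)$ is the minimum width of an ordering. $d_{\mathrm{ctw}}$ is a fixed constant, which is the square of an even integer, such that every tournament not containing a simple digraph $H'$ as an immersion has cutwidth at most $d_{\mathrm{ctw}}\|H'\|^2$ (such a constant exists by a result of Fomin and Pilipczuk). *)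

theory Defs
  imports Main
begin

type_synonym 'a digraph = "'a set \<times> ('a \<times> 'a) set"

definition verts :: "'a digraph \<Rightarrow> 'a set" where "verts G = fst G"
definition arcs :: "'a digraph \<Rightarrow> ('a \<times> 'a) set" where "arcs G = snd G"

text \<open>Simple digraph: finite, arcs between vertices, no loops (no parallel arcs by
  representation as a set of pairs).\<close>
definition simple_digraph :: "'a digraph \<Rightarrow> bool" where
  "simple_digraph G \<longleftrightarrow> finite (verts G) \<and> arcs G \<subseteq> verts G \<times> verts G
     \<and> (\<forall>v. (v, v) \<notin> arcs G)"

definition tournament :: "'a digraph \<Rightarrow> bool" where
  "tournament T \<longleftrightarrow> simple_digraph T \<and>
     (\<forall>u \<in> verts T. \<forall>v \<in> verts T. u \<noteq> v \<longrightarrow>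
        ((u, v) \<in> arcs T \<longleftrightarrow> (v, u) \<notin> arcs T))"

definition strongly_connected :: "'a digraph \<Rightarrow> bool" where
  "strongly_connected G \<longleftrightarrow> (\<forall>u \<in> verts G. \<forall>v \<in> verts G. (u, v) \<in> (arcs G)\<^sup>*)"

definition size_dg :: "'a digraph \<Rightarrow> nat" where
  "size_dg G = card (verts G) + card (arcs G)"

definition path_arcs :: "'a list \<Rightarrow> ('a \<times> 'a) set" where
  "path_arcs p = set (zip p (tl p))"

definition is_dpath :: "'a digraph \<Rightarrow> 'a list \<Rightarrow> 'a \<Rightarrow> 'a \<Rightarrow> bool" where
  "is_dpath G p x y \<longleftrightarrow> p \<noteq> [] \<and> distinct p \<and> hd p = x \<and> last p = y
     \<and> set p \<subseteq> verts G \<and> path_arcs p \<subseteq> arcs G"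

definition immersion_model ::
  "'a digraph \<Rightarrow> 'b digraph \<Rightarrow> ('b \<Rightarrow> 'a) \<Rightarrow> ('b \<times> 'b \<Rightarrow> 'a list) \<Rightarrow> bool" where
  "immersion_model G H phi P \<longleftrightarrow>
     inj_on phi (verts H) \<and> phi ` verts H \<subseteq> verts G \<and>
     (\<forall>e \<in> arcs H. is_dpath G (P e) (phi (fst e)) (phi (snd e))) \<and>
     (\<forall>e \<in> arcs H. \<forall>e' \<in> arcs H. e \<noteq> e' \<longrightarrow> path_arcs (P e) \<inter> path_arcs (P e') = {})"

definition model_arcs :: "'b digraph \<Rightarrow> ('b \<times> 'b \<Rightarrow> 'a list) \<Rightarrow> ('a \<times> 'a) set" where
  "model_arcs H P = (\<Union>e \<in> arcs H. path_arcs (P e))"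

definition contains_immersion :: "'a digraph \<Rightarrow> 'b digraph \<Rightarrow> bool" where
  "contains_immersion G H \<longleftrightarrow> (\<exists>phi P. immersion_model G H phi P)"

definition contains_k_disjoint_immersions :: "'a digraph \<Rightarrow> 'b digraph \<Rightarrow> nat \<Rightarrow> bool" where
  "contains_k_disjoint_immersions G H k \<longleftrightarrow>
     (\<exists>phi P. (\<forall>i < k. immersion_model G H (phi i) (P i)) \<and>
        (\<forall>i < k. \<forall>j < k. i \<noteq> j \<longrightarrow> model_arcs H (P i) \<inter> model_arcs H (P j) = {}))"

definition delete_arcs :: "'a digraph \<Rightarrow> ('a \<times> 'a) set \<Rightarrow> 'a digraph" where
  "delete_arcs G F = (verts G, arcs G - F)"

definition cut :: "'a digraph \<Rightarrow> ('a \<Rightarrow> nat) \<Rightarrow> nat \<Rightarrow> ('a \<times> 'a) set" where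
  "cut T \<sigma> \<alpha> = {(u, v) \<in> arcs T. \<sigma> u > \<alpha> \<and> \<alpha> \<ge> \<sigma> v}"

definition is_ordering :: "'a digraph \<Rightarrow> ('a \<Rightarrow> nat) \<Rightarrow> bool" where
  "is_ordering T \<sigma> \<longleftrightarrow> bij_betw \<sigma> (verts T) {1..card (verts T)}"

definition width :: "'a digraph \<Rightarrow> ('a \<Rightarrow> nat) \<Rightarrow> nat" where
  "width T \<sigma> = Max ((\<lambda>\<alpha>. card (cut T \<sigma> \<alpha>)) ` {0..card (verts T)})"

definition ctw :: "'a digraph \<Rightarrow> nat" where
  "ctw T = Min (width T ` {\<sigma>. is_ordering T \<sigma>})"

text \<open>The property of the constant d_ctw: square of an even integer, and every
  tournament not containing a simple digraph H' as an immersion has cutwidth at most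
  d * ||H'||^2. Finite digraphs are represented up to isomorphism with vertices in nat.\<close>
definition is_dctw :: "nat \<Rightarrow> bool" where
  "is_dctw d \<longleftrightarrow> (\<exists>m::nat. d = (2 * m)^2) \<and>
     (\<forall>(T :: nat digraph) (H' :: nat digraph). tournament T \<longrightarrow> simple_digraph H' \<longrightarrow>
        \<not> contains_immersion T H' \<longrightarrow> ctw T \<le> d * (size_dg H')^2)"

end

(*
  Induction on k, with k = a + b, a = ceil (k/2), b = floor (k/2). If T has no a disjoint
  copies of H, induction applies directly. Otherwise T does not immerse the disjoint union of
  k copies of H, a digraph of size k ||H||, so T has an ordering of width at most
  d k^2 ||H||^2. Let beta + 1 be the least position whose prefix contains a disjoint copies.
  Then the prefix up to beta contains fewer than a copies and the suffix after beta + 1 fewer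
  than b (together with the a copies they would give k). Delete transversals of these two
  parts, obtained by induction, together with the cuts at beta and beta + 1. A surviving copy
  of H is strongly connected, so it lies on one side of both cuts: inside the prefix, inside
  the suffix, or at the single vertex at position beta + 1, and all three are impossible.
  The count is 6 d ||H||^2 (a^2 + b^2) + 2 d k^2 ||H||^2 <= 6 d ||H||^2 k^2, because
  a^2 + b^2 <= 4 a b.
*)
theory Submission
  imports Defs
begin

lemma verts_pair [simp]: "verts (V, A) = V"
  and arcs_pair [simp]: "arcs (V, A) = A"
  by (simp_all add: verts_def arcs_def)

lemma verts_delete_arcs [simp]: "verts (delete_arcs G F) = verts G"
  and arcs_delete_arcs [simp]: "arcs (delete_arcs G F) = arcs G - F"
  by (simp_all add: delete_arcs_def)

lemma delete_arcs_empty [simp]: "delete_arcs G {} = G"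
  by (cases G) (simp add: delete_arcs_def)

lemma path_arcs_simps [simp]:
  "path_arcs [] = {}" "path_arcs [a] = {}"
  "path_arcs (a # b # q) = insert (a, b) (path_arcs (b # q))"
  by (simp_all add: path_arcs_def)

lemma path_arcs_subset: "path_arcs p \<subseteq> set p \<times> set p"
  by (induction p rule: induct_list012) auto

lemma path_arcs_map: "path_arcs (map f p) = map_prod f f ` path_arcs p"
  by (induction p rule: induct_list012) auto

lemma path_arcs_rtrancl:
  assumes "x \<in> set p"
  shows "(hd p, x) \<in> (path_arcs p)\<^sup>* \<and> (x, last p) \<in> (path_arcs p)\<^sup>*"
  using assms
proof (induction p arbitrary: x rule: induct_list012)
  case (3 a b q)
  have mono: "(path_arcs (b # q))\<^sup>* \<subseteq> (path_arcs (a # b # q))\<^sup>*"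
    by (rule rtrancl_mono) auto
  have ab: "(a, b) \<in> (path_arcs (a # b # q))\<^sup>*"
    by auto
  from "3.IH"(2)[of b] "3.IH"(2)[of x] "3.prems" show ?case
    using mono ab by (auto intro: rtrancl_trans)
qed auto

lemma dpath_rtrancl:
  assumes "is_dpath G p x y" and "z \<in> set p"
  shows "(x, z) \<in> (arcs G)\<^sup>*" and "(z, y) \<in> (arcs G)\<^sup>*"
proof -
  have "(path_arcs p)\<^sup>* \<subseteq> (arcs G)\<^sup>*"
    using assms(1) by (intro rtrancl_mono) (simp add: is_dpath_def)
  then show "(x, z) \<in> (arcs G)\<^sup>*" and "(z, y) \<in> (arcs G)\<^sup>*"
    using path_arcs_rtrancl[OF assms(2)] assms(1) by (auto simp: is_dpath_def)
qed

lemma dpath_endpoints_rtrancl: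
  assumes "is_dpath G p x y"
  shows "(x, y) \<in> (arcs G)\<^sup>*"
proof -
  have "y \<in> set p"
    using assms by (auto simp: is_dpath_def)
  then show ?thesis
    by (rule dpath_rtrancl(1)[OF assms])
qed

definition model_verts :: "'b digraph \<Rightarrow> ('b \<Rightarrow> 'a) \<Rightarrow> ('b \<times> 'b \<Rightarrow> 'a list) \<Rightarrow> 'a set" where
  "model_verts H phi P = phi ` verts H \<union> (\<Union>e \<in> arcs H. set (P e))"

lemma immersion_modelD:
  assumes "immersion_model G H phi P"
  shows "inj_on phi (verts H)" "phi ` verts H \<subseteq> verts G"
    "e \<in> arcs H \<Longrightarrow> is_dpath G (P e) (phi (fst e)) (phi (snd e))"
    "e \<in> arcs H \<Longrightarrow> e' \<in> arcs H \<Longrightarrow> e \<noteq> e' \<Longrightarrow> path_arcs (P e) \<inter> path_arcs (P e') = {}"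
  using assms unfolding immersion_model_def by simp_all

lemma model_verts_subset:
  assumes "immersion_model G H phi P"
  shows "model_verts H phi P \<subseteq> verts G"
proof -
  have "set (P e) \<subseteq> verts G" if "e \<in> arcs H" for e
    using immersion_modelD(3)[OF assms that] by (simp add: is_dpath_def)
  then show ?thesis
    using immersion_modelD(2)[OF assms] unfolding model_verts_def by blast
qed

lemma model_arcs_subset:
  assumes "immersion_model G H phi P"
  shows "model_arcs H P \<subseteq> arcs G"
  using immersion_modelD(3)[OF assms] by (fastforce simp: model_arcs_def is_dpath_def)

lemma immersion_model_mono:
  assumes "immersion_model G H phi P" and "verts G \<subseteq> verts G'" and "arcs G \<subseteq> arcs G'"
  shows "immersion_model G' H phi P"
proof -
  have "is_dpath G' p x y" if "is_dpath G p x y" for p x y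
    using that assms(2,3) unfolding is_dpath_def by blast
  then show ?thesis
    using assms(1,2) unfolding immersion_model_def by blast
qed

lemma model_verts_two_distinct:
  assumes m: "immersion_model G H phi P" and "simple_digraph H" and "arcs H \<noteq> {}"
  shows "\<exists>x \<in> model_verts H phi P. \<exists>y \<in> model_verts H phi P. x \<noteq> y"
proof -
  obtain u v where "(u, v) \<in> arcs H"
    using assms(3) by auto
  then have "u \<in> verts H" "v \<in> verts H" "u \<noteq> v"
    using assms(2) unfolding simple_digraph_def by auto
  then have "phi u \<noteq> phi v"
    using immersion_modelD(1)[OF m] by (meson inj_onD)
  with \<open>u \<in> verts H\<close> \<open>v \<in> verts H\<close> show ?thesis
    unfolding model_verts_def by blast
qed

lemma model_verts_rtrancl:
  assumes m: "immersion_model G H phi P" and sH: "simple_digraph H" and sc: "strongly_connected H"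
    and x: "x \<in> model_verts H phi P" and y: "y \<in> model_verts H phi P"
  shows "(x, y) \<in> (arcs G)\<^sup>*"
proof -
  have branch: "(phi u, phi v) \<in> (arcs G)\<^sup>*" if "u \<in> verts H" "v \<in> verts H" for u v
  proof -
    have "(u, v) \<in> (arcs H)\<^sup>*"
      using sc that by (simp add: strongly_connected_def)
    then show ?thesis
    proof (induction rule: rtrancl_induct)
      case (step b c)
      have "(phi b, phi c) \<in> (arcs G)\<^sup>*"
        using dpath_endpoints_rtrancl[OF immersion_modelD(3)[OF m step(2)]] by simp
      with step(3) show ?case
        by (rule rtrancl_trans)
    qed simp
  qed
  have ends: "\<exists>u \<in> verts H. \<exists>v \<in> verts H. (phi u, z) \<in> (arcs G)\<^sup>* \<and> (z, phi v) \<in> (arcs G)\<^sup>*"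
    if z: "z \<in> model_verts H phi P" for z
  proof (cases "z \<in> phi ` verts H")
    case False
    then obtain e where e: "e \<in> arcs H" "z \<in> set (P e)"
      using z unfolding model_verts_def by blast
    moreover have "fst e \<in> verts H" "snd e \<in> verts H"
      using sH e(1) by (auto simp: simple_digraph_def)
    ultimately show ?thesis
      using dpath_rtrancl[OF immersion_modelD(3)[OF m e(1)] e(2)] by blast
  qed auto
  from ends[OF x] ends[OF y] show ?thesis
    using branch by (meson rtrancl_trans)
qed

lemma model_verts_one_side:
  assumes m: "immersion_model (delete_arcs T F) H phi P"
    and sH: "simple_digraph H" and sc: "strongly_connected H" and "cut T \<sigma> \<beta> \<subseteq> F"
  shows "(\<forall>x \<in> model_verts H phi P. \<sigma> x \<le> \<beta>) \<or> (\<forall>x \<in> model_verts H phi P. \<beta> < \<sigma> x)"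
proof (rule ccontr)
  assume "\<not> ?thesis"
  then obtain x y where x: "x \<in> model_verts H phi P" "\<beta> < \<sigma> x"
    and y: "y \<in> model_verts H phi P" "\<sigma> y \<le> \<beta>"
    by (auto simp: not_le)
  have "(x, y) \<in> (arcs (delete_arcs T F))\<^sup>*"
    by (rule model_verts_rtrancl[OF m sH sc x(1) y(1)])
  then have "\<beta> < \<sigma> y"
  proof (induction rule: rtrancl_induct)
    case (step b c)
    then show ?case
      using \<open>cut T \<sigma> \<beta> \<subseteq> F\<close> by (force simp: cut_def delete_arcs_def)
  qed (use x in simp)
  with y show False
    by simp
qed

definition induced_subdigraph :: "'a digraph \<Rightarrow> 'a set \<Rightarrow> 'a digraph" where
  "induced_subdigraph T S = (S, arcs T \<inter> S \<times> S)"

lemma verts_induced_subdigraph [simp]: "verts (induced_subdigraph T S) = S"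
  and arcs_induced_subdigraph [simp]: "arcs (induced_subdigraph T S) = arcs T \<inter> S \<times> S"
  by (simp_all add: induced_subdigraph_def)

lemma induced_subdigraph_all:
  assumes "simple_digraph T"
  shows "induced_subdigraph T (verts T) = T"
  using assms by (cases T) (auto simp: induced_subdigraph_def simple_digraph_def)

lemma simple_digraph_induced_subdigraph:
  assumes "simple_digraph T" and "S \<subseteq> verts T"
  shows "simple_digraph (induced_subdigraph T S)"
proof -
  have "finite S"
    using assms finite_subset unfolding simple_digraph_def by blast
  then show ?thesis
    using assms(1) by (simp add: simple_digraph_def)
qed

lemma tournament_induced_subdigraph:
  assumes "tournament T" and "S \<subseteq> verts T"
  shows "tournament (induced_subdigraph T S)"
proof -
  have "simple_digraph (induced_subdigraph T S)"
    using assms(1) by (simp add: tournament_def simple_digraph_induced_subdigraph[OF _ assms(2)])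
  moreover have "(u, v) \<in> arcs T \<longleftrightarrow> (v, u) \<notin> arcs T" if "u \<in> S" "v \<in> S" "u \<noteq> v" for u v
    using assms that unfolding tournament_def by blast
  ultimately show ?thesis
    unfolding tournament_def verts_induced_subdigraph arcs_induced_subdigraph by blast
qed

lemma immersion_model_induced_subdigraph:
  assumes m: "immersion_model (delete_arcs T F) H phi P"
    and "model_verts H phi P \<subseteq> S" and "F' \<subseteq> F"
  shows "immersion_model (delete_arcs (induced_subdigraph T S) F') H phi P"
  unfolding immersion_model_def
proof (intro conjI ballI impI)
  show "inj_on phi (verts H)"
    by (rule immersion_modelD(1)[OF m])
  show "phi ` verts H \<subseteq> verts (delete_arcs (induced_subdigraph T S) F')"
    using assms(2) by (auto simp: model_verts_def delete_arcs_def)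
next
  fix e
  assume e: "e \<in> arcs H"
  have "set (P e) \<subseteq> S"
    using assms(2) e by (auto simp: model_verts_def)
  then show "is_dpath (delete_arcs (induced_subdigraph T S) F') (P e) (phi (fst e)) (phi (snd e))"
    using immersion_modelD(3)[OF m e] path_arcs_subset[of "P e"] assms(3)
    by (auto simp: is_dpath_def delete_arcs_def)
next
  fix e e'
  assume "e \<in> arcs H" "e' \<in> arcs H" "e \<noteq> e'"
  then show "path_arcs (P e) \<inter> path_arcs (P e') = {}"
    by (rule immersion_modelD(4)[OF m])
qed

lemma immersion_model_induced_subdigraphD:
  assumes "immersion_model (induced_subdigraph T S) H phi P" and "S \<subseteq> verts T"
  shows "immersion_model T H phi P"
  by (rule immersion_model_mono[OF assms(1)]) (use assms(2) in auto)

lemma contains_k_disjoint_immersions_mono: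
  assumes "contains_k_disjoint_immersions G H k" and "j \<le> k"
  shows "contains_k_disjoint_immersions G H j"
proof -
  obtain phi P where "\<forall>i < k. immersion_model G H (phi i) (P i)"
    and "\<forall>i < k. \<forall>i' < k. i \<noteq> i' \<longrightarrow> model_arcs H (P i) \<inter> model_arcs H (P i') = {}"
    using assms(1) unfolding contains_k_disjoint_immersions_def by blast
  then show ?thesis
    unfolding contains_k_disjoint_immersions_def using assms(2)
    by (intro exI[of _ phi] exI[of _ P]) auto
qed

lemma contains_k_disjoint_immersions_1:
  "contains_k_disjoint_immersions G H 1 \<longleftrightarrow> contains_immersion G H"
  unfolding contains_k_disjoint_immersions_def contains_immersion_def by auto

lemma contains_k_disjoint_immersions_Un:
  assumes "S1 \<inter> S2 = {}" and "S1 \<subseteq> verts T" and "S2 \<subseteq> verts T"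
    and "contains_k_disjoint_immersions (induced_subdigraph T S1) H a"
    and "contains_k_disjoint_immersions (induced_subdigraph T S2) H b"
  shows "contains_k_disjoint_immersions T H (a + b)"
proof -
  obtain phi1 P1 where m1: "\<forall>i<a. immersion_model (induced_subdigraph T S1) H (phi1 i) (P1 i)"
    and d1: "\<forall>i<a. \<forall>j<a. i \<noteq> j \<longrightarrow> model_arcs H (P1 i) \<inter> model_arcs H (P1 j) = {}"
    using assms(4) by (auto simp: contains_k_disjoint_immersions_def)
  obtain phi2 P2 where m2: "\<forall>i<b. immersion_model (induced_subdigraph T S2) H (phi2 i) (P2 i)"
    and d2: "\<forall>i<b. \<forall>j<b. i \<noteq> j \<longrightarrow> model_arcs H (P2 i) \<inter> model_arcs H (P2 j) = {}"
    using assms(5) by (auto simp: contains_k_disjoint_immersions_def)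
  define phi where "phi i = (if i < a then phi1 i else phi2 (i - a))" for i
  define P where "P i = (if i < a then P1 i else P2 (i - a))" for i
  have "immersion_model T H (phi i) (P i)" if "i < a + b" for i
  proof (cases "i < a")
    case True
    then show ?thesis
      using m1 assms(2) unfolding phi_def P_def by (auto intro: immersion_model_induced_subdigraphD)
  next
    case False
    then have "i - a < b"
      using that by arith
    then show ?thesis
      using m2 assms(3) False unfolding phi_def P_def
      by (auto intro: immersion_model_induced_subdigraphD)
  qed
  moreover have "model_arcs H (P i) \<inter> model_arcs H (P j) = {}"
    if "i < a + b" "j < a + b" "i \<noteq> j" for i j
  proof -
    have s1: "model_arcs H (P1 l) \<subseteq> S1 \<times> S1" if "l < a" for l
      using model_arcs_subset[OF m1[rule_format, OF that]] by auto
    have s2: "model_arcs H (P2 l) \<subseteq> S2 \<times> S2" if "l < b" for l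
      using model_arcs_subset[OF m2[rule_format, OF that]] by auto
    show ?thesis
    proof (cases "i < a"; cases "j < a")
      assume "i < a" "j < a"
      then show ?thesis
        using d1 \<open>i \<noteq> j\<close> unfolding P_def by simp
    next
      assume "\<not> i < a" "\<not> j < a"
      then show ?thesis
        using d2[rule_format, of "i - a" "j - a"] that unfolding P_def by simp
    next
      assume "i < a" "\<not> j < a"
      then have "model_arcs H (P i) \<subseteq> S1 \<times> S1" "model_arcs H (P j) \<subseteq> S2 \<times> S2"
        using s1 s2[of "j - a"] that unfolding P_def by auto
      then show ?thesis
        using assms(1) by blast
    next
      assume "\<not> i < a" "j < a"
      then have "model_arcs H (P i) \<subseteq> S2 \<times> S2" "model_arcs H (P j) \<subseteq> S1 \<times> S1"
        using s1 s2[of "i - a"] that unfolding P_def by auto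
      then show ?thesis
        using assms(1) by blast
    qed
  qed
  ultimately show ?thesis
    unfolding contains_k_disjoint_immersions_def by blast
qed

definition map_digraph :: "('a \<Rightarrow> 'c) \<Rightarrow> 'a digraph \<Rightarrow> 'c digraph" where
  "map_digraph f G = (f ` verts G, map_prod f f ` arcs G)"

lemma verts_map_digraph [simp]: "verts (map_digraph f G) = f ` verts G"
  and arcs_map_digraph [simp]: "arcs (map_digraph f G) = map_prod f f ` arcs G"
  by (simp_all add: map_digraph_def)

lemma inj_on_map_prod_square:
  assumes "inj_on f V" and "A \<subseteq> V \<times> V"
  shows "inj_on (map_prod f f) A"
  using map_prod_inj_on[OF assms(1) assms(1)] assms(2) by (rule inj_on_subset)

lemma map_digraph_inv_into:
  assumes "inj_on f (verts G)" and "arcs G \<subseteq> verts G \<times> verts G"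
  shows "map_digraph (inv_into (verts G) f) (map_digraph f G) = G"
proof -
  have "map_prod (inv_into (verts G) f) (inv_into (verts G) f) (map_prod f f e) = e"
    if "e \<in> arcs G" for e
    using that assms by (cases e) auto
  then have "map_prod (inv_into (verts G) f) (inv_into (verts G) f) ` map_prod f f ` arcs G = arcs G"
    by (simp add: image_comp cong: image_cong)
  then show ?thesis
    using assms(1) by (cases G) (simp add: map_digraph_def)
qed

lemma simple_digraph_map_digraph:
  assumes "inj_on f (verts G)" and "simple_digraph G"
  shows "simple_digraph (map_digraph f G)"
proof -
  have "(v, v) \<notin> map_prod f f ` arcs G" for v
  proof
    assume "(v, v) \<in> map_prod f f ` arcs G"
    then obtain a b where ab: "(a, b) \<in> arcs G" "f a = v" "f b = v"
      by auto
    moreover have "a \<in> verts G" "b \<in> verts G"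
      using ab(1) assms(2) by (auto simp: simple_digraph_def)
    ultimately have "a = b"
      using assms(1) by (metis inj_onD)
    with ab(1) show False
      using assms(2) by (simp add: simple_digraph_def)
  qed
  moreover have "map_prod f f ` arcs G \<subseteq> f ` verts G \<times> f ` verts G"
    using assms(2) by (auto simp: simple_digraph_def)
  ultimately show ?thesis
    using assms(2) by (simp add: simple_digraph_def)
qed

lemma tournament_map_digraph:
  assumes inj: "inj_on f (verts T)" and t: "tournament T"
  shows "tournament (map_digraph f T)"
proof -
  have AT: "arcs T \<subseteq> verts T \<times> verts T"
    using t by (simp add: tournament_def simple_digraph_def)
  have mem: "(f u, f v) \<in> map_prod f f ` arcs T \<longleftrightarrow> (u, v) \<in> arcs T"
    if "u \<in> verts T" "v \<in> verts T" for u v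
    using inj_on_image_mem_iff[OF map_prod_inj_on[OF inj inj], of "(u, v)" "arcs T"] AT that by simp
  show ?thesis
    unfolding tournament_def verts_map_digraph arcs_map_digraph
  proof (intro conjI ballI impI)
    show "simple_digraph (map_digraph f T)"
      using simple_digraph_map_digraph[OF inj] t by (simp add: tournament_def)
  next
    fix x y
    assume xy: "x \<in> f ` verts T" "y \<in> f ` verts T" "x \<noteq> y"
    then obtain u v where uv: "u \<in> verts T" "v \<in> verts T" "x = f u" "y = f v"
      by blast
    have "u \<noteq> v"
      using uv xy(3) by auto
    then have "(u, v) \<in> arcs T \<longleftrightarrow> (v, u) \<notin> arcs T"
      using t uv(1,2) unfolding tournament_def by blast
    then show "(x, y) \<in> map_prod f f ` arcs T \<longleftrightarrow> (y, x) \<notin> map_prod f f ` arcs T"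
      unfolding uv(3,4) mem[OF uv(1,2)] mem[OF uv(2,1)] .
  qed
qed

lemma size_dg_map_digraph:
  assumes "inj_on f (verts G)" and "arcs G \<subseteq> verts G \<times> verts G"
  shows "size_dg (map_digraph f G) = size_dg G"
  using assms inj_on_map_prod_square[OF assms] by (simp add: size_dg_def card_image)

lemma width_map_digraph:
  assumes "inj_on f (verts T)" and "arcs T \<subseteq> verts T \<times> verts T"
  shows "width (map_digraph f T) \<sigma> = width T (\<sigma> \<circ> f)"
proof -
  have "cut (map_digraph f T) \<sigma> \<beta> = map_prod f f ` cut T (\<sigma> \<circ> f) \<beta>" for \<beta>
    by (auto simp: cut_def)
  moreover have "inj_on (map_prod f f) (cut T (\<sigma> \<circ> f) \<beta>)" for \<beta>
    using assms by (intro inj_on_map_prod_square) (auto simp: cut_def)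
  ultimately have "card (cut (map_digraph f T) \<sigma> \<beta>) = card (cut T (\<sigma> \<circ> f) \<beta>)" for \<beta>
    by (simp add: card_image)
  then show ?thesis
    using assms(1) by (simp add: width_def card_image)
qed

lemma is_ordering_map_digraph:
  assumes "inj_on f (verts T)" and "is_ordering (map_digraph f T) \<sigma>"
  shows "is_ordering T (\<sigma> \<circ> f)"
  using assms bij_betw_trans[OF inj_on_imp_bij_betw[OF assms(1)]]
  by (simp add: is_ordering_def card_image)

lemma immersion_model_map_digraph:
  assumes inj: "inj_on f (verts G)" and AG: "arcs G \<subseteq> verts G \<times> verts G"
    and m: "immersion_model G H phi P"
  shows "immersion_model (map_digraph f G) H (f \<circ> phi) (map f \<circ> P)"
  unfolding immersion_model_def
proof (intro conjI ballI impI)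
  show "inj_on (f \<circ> phi) (verts H)"
    using immersion_modelD(1,2)[OF m] inj by (meson comp_inj_on inj_on_subset)
  show "(f \<circ> phi) ` verts H \<subseteq> verts (map_digraph f G)"
    using immersion_modelD(2)[OF m] by auto
next
  fix e
  assume e: "e \<in> arcs H"
  have p: "is_dpath G (P e) (phi (fst e)) (phi (snd e))"
    by (rule immersion_modelD(3)[OF m e])
  then have "inj_on f (set (P e))"
    using inj by (auto simp: is_dpath_def intro: inj_on_subset)
  then show "is_dpath (map_digraph f G) ((map f \<circ> P) e) ((f \<circ> phi) (fst e)) ((f \<circ> phi) (snd e))"
    using p unfolding is_dpath_def by (auto simp: distinct_map hd_map last_map path_arcs_map)
next
  fix e e'
  assume e: "e \<in> arcs H" "e' \<in> arcs H" "e \<noteq> e'"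
  have "path_arcs (P e) \<union> path_arcs (P e') \<subseteq> verts G \<times> verts G"
    using model_arcs_subset[OF m] e AG unfolding model_arcs_def by auto
  then have inj_paths: "inj_on (map_prod f f) (path_arcs (P e) \<union> path_arcs (P e'))"
    using inj by (rule inj_on_map_prod_square[rotated])
  show "path_arcs ((map f \<circ> P) e) \<inter> path_arcs ((map f \<circ> P) e') = {}"
    using inj_on_image_Int[OF inj_paths Un_upper1 Un_upper2] immersion_modelD(4)[OF m e]
    by (simp add: path_arcs_map)
qed

lemma immersion_model_of_map_digraph:
  assumes m: "immersion_model G (map_digraph g X) psi Q"
    and inj: "inj_on g (verts X)" and AX: "arcs X \<subseteq> verts X \<times> verts X"
  shows "immersion_model G X (psi \<circ> g) (Q \<circ> map_prod g g)"
  unfolding immersion_model_def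
proof (intro conjI ballI impI)
  show "inj_on (psi \<circ> g) (verts X)"
    using immersion_modelD(1)[OF m] inj by (simp add: comp_inj_on)
  show "(psi \<circ> g) ` verts X \<subseteq> verts G"
    using immersion_modelD(2)[OF m] by (simp add: image_comp)
next
  fix e
  assume "e \<in> arcs X"
  then show "is_dpath G ((Q \<circ> map_prod g g) e) ((psi \<circ> g) (fst e)) ((psi \<circ> g) (snd e))"
    using immersion_modelD(3)[OF m, of "map_prod g g e"] by (cases e) auto
next
  fix e e'
  assume e: "e \<in> arcs X" "e' \<in> arcs X" "e \<noteq> e'"
  then have "map_prod g g e \<noteq> map_prod g g e'"
    using inj_on_map_prod_square[OF inj AX] by (meson inj_onD)
  then show "path_arcs ((Q \<circ> map_prod g g) e) \<inter> path_arcs ((Q \<circ> map_prod g g) e') = {}"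
    using immersion_modelD(4)[OF m] e(1,2) by simp
qed

lemma contains_immersion_map_digraphD:
  assumes "contains_immersion (map_digraph f G) (map_digraph g X)"
    and "inj_on f (verts G)" and "simple_digraph G"
    and "inj_on g (verts X)" and "simple_digraph X"
  shows "contains_immersion G X"
proof -
  have AG: "arcs G \<subseteq> verts G \<times> verts G" and AX: "arcs X \<subseteq> verts X \<times> verts X"
    using assms(3,5) by (simp_all add: simple_digraph_def)
  obtain psi Q where "immersion_model (map_digraph f G) (map_digraph g X) psi Q"
    using assms(1) by (auto simp: contains_immersion_def)
  then have "immersion_model (map_digraph f G) X (psi \<circ> g) (Q \<circ> map_prod g g)"
    using assms(4) AX by (rule immersion_model_of_map_digraph)
  moreover have "inj_on (inv_into (verts G) f) (verts (map_digraph f G))"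
    by (simp add: inj_on_inv_into)
  moreover have "arcs (map_digraph f G) \<subseteq> verts (map_digraph f G) \<times> verts (map_digraph f G)"
    using AG by auto
  ultimately have "immersion_model (map_digraph (inv_into (verts G) f) (map_digraph f G)) X
      (inv_into (verts G) f \<circ> (psi \<circ> g)) (map (inv_into (verts G) f) \<circ> (Q \<circ> map_prod g g))"
    by (intro immersion_model_map_digraph)
  then show ?thesis
    unfolding map_digraph_inv_into[OF assms(2) AG] contains_immersion_def by blast
qed

definition disjoint_copies :: "'b digraph \<Rightarrow> nat \<Rightarrow> (nat \<times> 'b) digraph" where
  "disjoint_copies H k =
     ({..<k} \<times> verts H, (\<lambda>(i, e). ((i, fst e), (i, snd e))) ` ({..<k} \<times> arcs H))"

lemma simple_digraph_disjoint_copies: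
  assumes "simple_digraph H"
  shows "simple_digraph (disjoint_copies H k)"
  using assms by (auto simp: simple_digraph_def disjoint_copies_def)

lemma size_dg_disjoint_copies:
  "size_dg (disjoint_copies H k) = k * size_dg H"
proof -
  have "inj_on (\<lambda>(i, e). ((i, fst e), (i, snd e))) ({..<k} \<times> arcs H)"
    by (auto simp: inj_on_def prod_eq_iff)
  then show ?thesis
    by (simp add: size_dg_def disjoint_copies_def card_image card_cartesian_product algebra_simps)
qed

lemma contains_immersion_disjoint_copies:
  assumes "contains_immersion G (disjoint_copies H k)"
  shows "contains_k_disjoint_immersions G H k"
proof -
  obtain phi P where m: "immersion_model G (disjoint_copies H k) phi P"
    using assms by (auto simp: contains_immersion_def)
  define copy_arc where "copy_arc i e = ((i, fst e), (i, snd e))" for i :: nat and e :: "'b \<times> 'b"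
  have arc: "copy_arc i e \<in> arcs (disjoint_copies H k)" if "i < k" "e \<in> arcs H" for i e
    using that by (force simp: disjoint_copies_def copy_arc_def)
  have copy_arc_eq: "copy_arc i e = copy_arc j e' \<longleftrightarrow> i = j \<and> e = e'" for i j e e'
    by (auto simp: copy_arc_def prod_eq_iff)
  have "immersion_model G H (\<lambda>v. phi (i, v)) (\<lambda>e. P (copy_arc i e))" if "i < k" for i
    unfolding immersion_model_def
  proof (intro conjI ballI impI)
    show "inj_on (\<lambda>v. phi (i, v)) (verts H)"
      using immersion_modelD(1)[OF m] that by (auto simp: inj_on_def disjoint_copies_def)
    show "(\<lambda>v. phi (i, v)) ` verts H \<subseteq> verts G"
      using immersion_modelD(2)[OF m] that by (auto simp: disjoint_copies_def)
  next
    fix e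
    assume "e \<in> arcs H"
    then show "is_dpath G (P (copy_arc i e)) (phi (i, fst e)) (phi (i, snd e))"
      using immersion_modelD(3)[OF m arc[OF that]] by (simp add: copy_arc_def)
  next
    fix e e'
    assume "e \<in> arcs H" "e' \<in> arcs H" "e \<noteq> e'"
    then show "path_arcs (P (copy_arc i e)) \<inter> path_arcs (P (copy_arc i e')) = {}"
      using immersion_modelD(4)[OF m arc[OF that] arc[OF that]] copy_arc_eq by blast
  qed
  moreover have "model_arcs H (\<lambda>e. P (copy_arc i e)) \<inter> model_arcs H (\<lambda>e. P (copy_arc j e)) = {}"
    if "i < k" "j < k" "i \<noteq> j" for i j
    using immersion_modelD(4)[OF m arc[OF that(1)] arc[OF that(2)]] copy_arc_eq that(3)
    unfolding model_arcs_def by blast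
  ultimately show ?thesis
    unfolding contains_k_disjoint_immersions_def
    by (intro exI[of _ "\<lambda>i v. phi (i, v)"] exI[of _ "\<lambda>i e. P (copy_arc i e)"]) simp
qed

lemma cut_card_le_width:
  assumes "\<beta> \<le> card (verts T)"
  shows "card (cut T \<sigma> \<beta>) \<le> width T \<sigma>"
  unfolding width_def using assms by (intro Max_ge) auto

lemma ex_ordering:
  assumes "finite (verts G)"
  shows "\<exists>\<sigma>. is_ordering G \<sigma>"
proof -
  obtain h where "bij_betw h (verts G) {0..<card (verts G)}"
    using ex_bij_betw_finite_nat[OF assms] by blast
  moreover have "bij_betw Suc {0..<card (verts G)} {1..card (verts G)}"
    by (simp add: bij_betw_def image_Suc_atLeastLessThan atLeastLessThanSuc_atLeastAtMost)
  ultimately show ?thesis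
    unfolding is_ordering_def by (blast intro: bij_betw_trans)
qed

lemma ctw_attained:
  assumes "simple_digraph G"
  shows "\<exists>\<sigma>. is_ordering G \<sigma> \<and> width G \<sigma> = ctw G"
proof -
  have "finite (arcs G)"
    using assms finite_subset unfolding simple_digraph_def by blast
  then have "width G \<sigma> \<le> card (arcs G)" for \<sigma>
    unfolding width_def by (auto simp: cut_def intro!: card_mono)
  then have "finite (width G ` {\<sigma>. is_ordering G \<sigma>})"
    by (auto intro: finite_subset[of _ "{..card (arcs G)}"])
  moreover have "width G ` {\<sigma>. is_ordering G \<sigma>} \<noteq> {}"
    using ex_ordering[of G] assms by (auto simp: simple_digraph_def)
  ultimately show ?thesis
    using Min_in unfolding ctw_def by fastforce
qed

lemma is_dctwD:
  fixes T H' :: "nat digraph"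
  assumes "is_dctw d" and "tournament T" and "simple_digraph H'" and "\<not> contains_immersion T H'"
  shows "ctw T \<le> d * (size_dg H')^2"
proof -
  have "\<forall>(T :: nat digraph) (H' :: nat digraph). tournament T \<longrightarrow> simple_digraph H' \<longrightarrow>
      \<not> contains_immersion T H' \<longrightarrow> ctw T \<le> d * (size_dg H')^2"
    using assms(1) unfolding is_dctw_def by (rule conjunct2)
  then show ?thesis
    using assms(2-4) by blast
qed

text \<open>The defining property of d_ctw quantifies over digraphs on nat only, so T and the
  disjoint union of k copies of H are first relabelled into nat.\<close>
lemma ex_ordering_width_le:
  fixes T :: "'a digraph" and H :: "'b digraph"
  assumes "is_dctw d" and "simple_digraph H" and "tournament T"
    and "\<not> contains_k_disjoint_immersions T H k"
  shows "\<exists>\<sigma>. is_ordering T \<sigma> \<and> width T \<sigma> \<le> d * (k * size_dg H)^2"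
proof -
  define K where "K = disjoint_copies H k"
  have sT: "simple_digraph T"
    using assms(3) by (simp add: tournament_def)
  have sK: "simple_digraph K"
    unfolding K_def using assms(2) by (rule simple_digraph_disjoint_copies)
  obtain f :: "'a \<Rightarrow> nat" where f: "inj_on f (verts T)"
    using finite_imp_inj_to_nat_seg[of "verts T"] sT unfolding simple_digraph_def by blast
  obtain g :: "nat \<times> 'b \<Rightarrow> nat" where g: "inj_on g (verts K)"
    using finite_imp_inj_to_nat_seg[of "verts K"] sK unfolding simple_digraph_def by blast
  have "\<not> contains_immersion (map_digraph f T) (map_digraph g K)"
    using contains_immersion_map_digraphD[OF _ f sT g sK] contains_immersion_disjoint_copies
      assms(4) unfolding K_def by blast
  moreover have "tournament (map_digraph f T)" "simple_digraph (map_digraph g K)"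
    using tournament_map_digraph[OF f assms(3)] simple_digraph_map_digraph[OF g sK] .
  ultimately have "ctw (map_digraph f T) \<le> d * (size_dg (map_digraph g K))^2"
    using is_dctwD[OF assms(1)] by blast
  also have "size_dg (map_digraph g K) = k * size_dg H"
    using size_dg_map_digraph[OF g] sK by (simp add: simple_digraph_def size_dg_disjoint_copies K_def)
  finally have ctw_le: "ctw (map_digraph f T) \<le> d * (k * size_dg H)^2" .
  obtain \<sigma> where \<sigma>: "is_ordering (map_digraph f T) \<sigma>"
    and "width (map_digraph f T) \<sigma> = ctw (map_digraph f T)"
    using ctw_attained simple_digraph_map_digraph[OF f sT] by blast
  moreover have "width (map_digraph f T) \<sigma> = width T (\<sigma> \<circ> f)"
    using f sT by (simp add: width_map_digraph simple_digraph_def)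
  ultimately show ?thesis
    using is_ordering_map_digraph[OF f \<sigma>] ctw_le by auto
qed

definition immersion_transversal :: "'a digraph \<Rightarrow> 'b digraph \<Rightarrow> ('a \<times> 'a) set \<Rightarrow> bool" where
  "immersion_transversal T H F \<longleftrightarrow> F \<subseteq> arcs T \<and> \<not> contains_immersion (delete_arcs T F) H"

lemma ex_split_position:
  assumes "simple_digraph T" and "is_ordering T \<sigma>"
    and "simple_digraph H" and "arcs H \<noteq> {}" and "1 \<le> a"
    and "contains_k_disjoint_immersions T H a"
    and "\<not> contains_k_disjoint_immersions T H (a + b)"
  shows "\<exists>\<beta> < card (verts T).
    \<not> contains_k_disjoint_immersions (induced_subdigraph T {v \<in> verts T. \<sigma> v \<le> \<beta>}) H a \<and>
    \<not> contains_k_disjoint_immersions (induced_subdigraph T {v \<in> verts T. Suc \<beta> < \<sigma> v}) H b"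
proof -
  define prefix where "prefix \<beta> = {v \<in> verts T. \<sigma> v \<le> \<beta>}" for \<beta>
  define suffix where "suffix \<beta> = {v \<in> verts T. \<beta> < \<sigma> v}" for \<beta>
  let ?P = "\<lambda>\<beta>. contains_k_disjoint_immersions (induced_subdigraph T (prefix \<beta>)) H a"
  have range: "1 \<le> \<sigma> v \<and> \<sigma> v \<le> card (verts T)" if "v \<in> verts T" for v
    using assms(2) that by (auto simp: is_ordering_def bij_betw_def)
  have "prefix (card (verts T)) = verts T"
    using range by (auto simp: prefix_def)
  then have "?P (card (verts T))"
    using assms(6) induced_subdigraph_all[OF assms(1)] by simp
  moreover have "\<not> ?P 0"
  proof
    assume "?P 0"
    then have "contains_immersion (induced_subdigraph T (prefix 0)) H"
      using contains_k_disjoint_immersions_mono[OF _ assms(5)]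
      by (simp only: contains_k_disjoint_immersions_1)
    then obtain phi P where m: "immersion_model (induced_subdigraph T (prefix 0)) H phi P"
      unfolding contains_immersion_def by blast
    obtain x where "x \<in> model_verts H phi P"
      using model_verts_two_distinct[OF m assms(3,4)] by blast
    moreover have "prefix 0 = {}"
      using range by (force simp: prefix_def)
    ultimately show False
      using model_verts_subset[OF m] by auto
  qed
  ultimately obtain \<beta> where \<beta>: "\<beta> < card (verts T)" "\<forall>i \<le> \<beta>. \<not> ?P i" "?P (Suc \<beta>)"
    using ex_least_nat_less[of ?P] by blast
  moreover have "\<not> contains_k_disjoint_immersions (induced_subdigraph T (suffix (Suc \<beta>))) H b"
  proof
    assume "contains_k_disjoint_immersions (induced_subdigraph T (suffix (Suc \<beta>))) H b"
    with \<beta>(3) have "contains_k_disjoint_immersions T H (a + b)"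
      by (rule contains_k_disjoint_immersions_Un[rotated 3]) (auto simp: prefix_def suffix_def)
    with assms(7) show False
      by contradiction
  qed
  ultimately show ?thesis
    unfolding prefix_def suffix_def by auto
qed

lemma immersion_transversal_split:
  assumes sH: "simple_digraph H" and sc: "strongly_connected H" and aH: "arcs H \<noteq> {}"
    and \<sigma>: "is_ordering T \<sigma>"
    and FL: "immersion_transversal (induced_subdigraph T {v \<in> verts T. \<sigma> v \<le> \<beta>}) H FL"
    and FR: "immersion_transversal (induced_subdigraph T {v \<in> verts T. Suc \<beta> < \<sigma> v}) H FR"
  shows "immersion_transversal T H (FL \<union> FR \<union> cut T \<sigma> \<beta> \<union> cut T \<sigma> (Suc \<beta>))"
  unfolding immersion_transversal_def
proof (intro conjI notI)
  let ?F = "FL \<union> FR \<union> cut T \<sigma> \<beta> \<union> cut T \<sigma> (Suc \<beta>)"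
  show "?F \<subseteq> arcs T"
    using FL FR by (auto simp: immersion_transversal_def cut_def)
  assume "contains_immersion (delete_arcs T ?F) H"
  then obtain phi P where m: "immersion_model (delete_arcs T ?F) H phi P"
    unfolding contains_immersion_def by blast
  define W where "W = model_verts H phi P"
  have WT: "W \<subseteq> verts T"
    using model_verts_subset[OF m] unfolding W_def by simp
  have "(\<forall>x \<in> W. \<sigma> x \<le> \<beta>) \<or> (\<forall>x \<in> W. \<beta> < \<sigma> x)"
    and "(\<forall>x \<in> W. \<sigma> x \<le> Suc \<beta>) \<or> (\<forall>x \<in> W. Suc \<beta> < \<sigma> x)"
    unfolding W_def by (rule model_verts_one_side[OF m sH sc]; blast)+
  then consider (left) "\<forall>x \<in> W. \<sigma> x \<le> \<beta>" | (right) "\<forall>x \<in> W. Suc \<beta> < \<sigma> x"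
    | (middle) "\<forall>x \<in> W. \<beta> < \<sigma> x \<and> \<sigma> x \<le> Suc \<beta>"
    by blast
  then show False
  proof cases
    case left
    then have "W \<subseteq> {v \<in> verts T. \<sigma> v \<le> \<beta>}"
      using WT by auto
    then have "immersion_model (delete_arcs (induced_subdigraph T {v \<in> verts T. \<sigma> v \<le> \<beta>}) FL) H phi P"
      using immersion_model_induced_subdigraph[OF m] unfolding W_def by blast
    with FL show False
      by (auto simp: immersion_transversal_def contains_immersion_def)
  next
    case right
    then have "W \<subseteq> {v \<in> verts T. Suc \<beta> < \<sigma> v}"
      using WT by auto
    then have "immersion_model (delete_arcs (induced_subdigraph T {v \<in> verts T. Suc \<beta> < \<sigma> v}) FR) H phi P"
      using immersion_model_induced_subdigraph[OF m] unfolding W_def by blast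
    with FR show False
      by (auto simp: immersion_transversal_def contains_immersion_def)
  next
    case middle
    then have "\<forall>x \<in> W. \<sigma> x = Suc \<beta>"
      by force
    obtain x y where "x \<in> W" "y \<in> W" "x \<noteq> y"
      using model_verts_two_distinct[OF m sH aH] unfolding W_def by blast
    moreover have "inj_on \<sigma> (verts T)"
      using \<sigma> by (simp add: is_ordering_def bij_betw_def)
    ultimately show False
      using \<open>\<forall>x \<in> W. \<sigma> x = Suc \<beta>\<close> WT by (metis inj_onD subsetD)
  qed
qed

lemma card_split_transversal_le:
  assumes "finite (arcs T)" and "Suc \<beta> \<le> card (verts T)"
  shows "card (FL \<union> FR \<union> cut T \<sigma> \<beta> \<union> cut T \<sigma> (Suc \<beta>)) \<le> card FL + card FR + 2 * width T \<sigma>"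
proof -
  have "card (FL \<union> FR \<union> cut T \<sigma> \<beta> \<union> cut T \<sigma> (Suc \<beta>))
      \<le> card FL + card FR + card (cut T \<sigma> \<beta>) + card (cut T \<sigma> (Suc \<beta>))"
    by (meson add_le_mono card_Un_le order_trans le_refl)
  moreover have "card (cut T \<sigma> \<beta>) \<le> width T \<sigma>" "card (cut T \<sigma> (Suc \<beta>)) \<le> width T \<sigma>"
    using assms(2) by (simp_all add: cut_card_le_width)
  ultimately show ?thesis
    by linarith
qed

lemma square_halves_bound:
  fixes a b c :: nat
  assumes "b \<le> a" and "a \<le> b + 1" and "1 \<le> b"
  shows "6 * c * a^2 + 6 * c * b^2 + 2 * (c * (a + b)^2) \<le> 6 * c * (a + b)^2"
proof -
  have "a^2 + b^2 \<le> 4 * a * b"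
  proof (cases "a = b")
    case False
    then have "a = b + 1"
      using assms(1,2) by simp
    then show ?thesis
      using assms(3) by (simp add: power2_eq_square algebra_simps)
  qed (simp add: power2_eq_square)
  then have "6 * a^2 + 6 * b^2 + 2 * (a + b)^2 \<le> 6 * (a + b)^2"
    by (simp add: power2_eq_square algebra_simps)
  then have "c * (6 * a^2 + 6 * b^2 + 2 * (a + b)^2) \<le> c * (6 * (a + b)^2)"
    by (rule mult_le_mono2)
  then show ?thesis
    by (simp add: algebra_simps)
qed

lemma immersion_transversal_step:
  fixes H :: "'b digraph" and T :: "'a digraph"
  assumes dctw: "is_dctw d" and sH: "simple_digraph H" and sc: "strongly_connected H"
    and aH: "arcs H \<noteq> {}" and "2 \<le> k" and t: "tournament T"
    and nk: "\<not> contains_k_disjoint_immersions T H k"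
    and IH: "\<And>j (T' :: 'a digraph). 1 \<le> j \<Longrightarrow> j < k \<Longrightarrow> tournament T' \<Longrightarrow>
      \<not> contains_k_disjoint_immersions T' H j \<Longrightarrow>
      \<exists>F. immersion_transversal T' H F \<and> card F \<le> 6 * d * (size_dg H)^2 * j^2"
  shows "\<exists>F. immersion_transversal T H F \<and> card F \<le> 6 * d * (size_dg H)^2 * k^2"
proof -
  define c where "c = d * (size_dg H)^2"
  define a where "a = (k + 1) div 2"
  define b where "b = k div 2"
  have ab: "a + b = k" "1 \<le> b" "b \<le> a" "a \<le> b + 1" "a < k"
    using \<open>2 \<le> k\<close> unfolding a_def b_def by auto
  have sT: "simple_digraph T"
    using t by (simp add: tournament_def)
  show ?thesis
  proof (cases "contains_k_disjoint_immersions T H a")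
    case False
    then obtain F where "immersion_transversal T H F" "card F \<le> 6 * d * (size_dg H)^2 * a^2"
      using IH[OF _ ab(5) t] ab by auto
    moreover have "a^2 \<le> k^2"
      using ab(5) by (simp add: power_mono)
    ultimately show ?thesis
      by (meson le_trans mult_le_mono2)
  next
    case True
    obtain \<sigma> where \<sigma>: "is_ordering T \<sigma>" "width T \<sigma> \<le> c * k^2"
      using ex_ordering_width_le[OF dctw sH t nk] by (auto simp: c_def power_mult_distrib mult_ac)
    obtain \<beta> where \<beta>: "\<beta> < card (verts T)"
      "\<not> contains_k_disjoint_immersions (induced_subdigraph T {v \<in> verts T. \<sigma> v \<le> \<beta>}) H a"
      "\<not> contains_k_disjoint_immersions (induced_subdigraph T {v \<in> verts T. Suc \<beta> < \<sigma> v}) H b"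
      using ex_split_position[OF sT \<sigma>(1) sH aH _ True] nk ab by auto
    obtain FL where FL: "immersion_transversal (induced_subdigraph T {v \<in> verts T. \<sigma> v \<le> \<beta>}) H FL"
      "card FL \<le> 6 * c * a^2"
      using IH[OF _ ab(5) tournament_induced_subdigraph[OF t] \<beta>(2)] ab unfolding c_def by auto
    obtain FR where FR: "immersion_transversal (induced_subdigraph T {v \<in> verts T. Suc \<beta> < \<sigma> v}) H FR"
      "card FR \<le> 6 * c * b^2"
      using IH[OF _ _ tournament_induced_subdigraph[OF t] \<beta>(3)] ab unfolding c_def by auto
    let ?F = "FL \<union> FR \<union> cut T \<sigma> \<beta> \<union> cut T \<sigma> (Suc \<beta>)"
    have F: "immersion_transversal T H ?F"
      by (rule immersion_transversal_split[OF sH sc aH \<sigma>(1) FL(1) FR(1)])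
    have "finite (arcs T)"
      using sT finite_subset unfolding simple_digraph_def by blast
    then have "card ?F \<le> 6 * c * a^2 + 6 * c * b^2 + 2 * (c * k^2)"
      using card_split_transversal_le[of T \<beta> FL FR \<sigma>] \<beta>(1) FL(2) FR(2) \<sigma>(2) by linarith
    moreover have "6 * c * a^2 + 6 * c * b^2 + 2 * (c * k^2) \<le> 6 * c * k^2"
      using square_halves_bound[OF ab(3,4,2)] ab(1) by simp
    moreover have "6 * d * (size_dg H)^2 * k^2 = 6 * c * k^2"
      unfolding c_def by (simp add: mult.assoc)
    ultimately have "card ?F \<le> 6 * d * (size_dg H)^2 * k^2"
      by linarith
    with F show ?thesis
      by blast
  qed
qed

theorem lemma16:
  fixes H :: "'b digraph" and T :: "'a digraph" and k d :: nat
  assumes "is_dctw d"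
    and "simple_digraph H" and "strongly_connected H" and "arcs H \<noteq> {}"
    and "k \<ge> 1"
    and "tournament T"
    and "\<not> contains_k_disjoint_immersions T H k"
  shows "\<exists>F \<subseteq> arcs T. card F \<le> 6 * d * (size_dg H)^2 * k^2
           \<and> \<not> contains_immersion (delete_arcs T F) H"
  using assms(5-7)
proof (induction k arbitrary: T rule: less_induct)
  case (less k T)
  show ?case
  proof (cases "k = 1")
    case True
    then have "\<not> contains_immersion T H"
      using less.prems(3) contains_k_disjoint_immersions_1 by blast
    then show ?thesis
      by (intro exI[of _ "{}"]) simp
  next
    case False
    have "\<exists>F. immersion_transversal T H F \<and> card F \<le> 6 * d * (size_dg H)^2 * k^2"
    proof (rule immersion_transversal_step[OF assms(1-4) _ less.prems(2,3)])
      show "2 \<le> k"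
        using False less.prems(1) by simp
    next
      fix j and T' :: "'a digraph"
      assume "1 \<le> j" "j < k" "tournament T'" "\<not> contains_k_disjoint_immersions T' H j"
      then show "\<exists>F. immersion_transversal T' H F \<and> card F \<le> 6 * d * (size_dg H)^2 * j^2"
        using less.IH unfolding immersion_transversal_def by blast
    qed
    then show ?thesis
      unfolding immersion_transversal_def by blast
  qed
qed

end
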